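(* Let $f \in \mathcal{S}^1_{\mu,L}(\mathbb{R}^d)$ with $0<\mu\le L$, let $x^\star$ be its unique minimizer, let $r\ge 2$, $0<s<1/L$, and $K := \max\left\{0, \frac{3r^2 - 4r - 12}{8}\right\}$. Let $\{x_k\},\{y_k\},\{z_k\}$ be generated by M-NAG from $x_0=y_0\in\mathbb{R}^d$, and for integers $k\ge 0$ define \[ \mathcal{E}(k) := s(k+1)(k+r+1)\big(f(x_{k+1}) - f(x^\star)\big) + \frac12\Big\|k(y_k - x_k) + r(y_k - x^\star) - (k+r)s\nabla f(y_k)\Big\|^2 . \] Then for every integer $k\ge K$, \[ \mathcal{E}(k+1) - \mathcal{E}(k) \le -\mu s\cdot\frac{1 - Ls}{4}\cdot \mathcal{E}(k+1). \]
   Context: $\mathcal{S}^1_{\mu,L}(\mathbb{R}^d)$ denotes the class of continuously differentiable convex functions $f:\mathbb{R}^d\to\mathbb{R}$ whose gradient is $L$-Lipschitz and which are $\mu$-strongly convex, $f(y)\ge f(x)+\langle\nabla f(x),y-x\rangle+\frac{\mu}{2}\|y-x\|^2$ for all $x,y$. M-NAG with step size $s$ and momentum parameter $r$ is the iteration, for $k \ge 0$: $z_k = y_k - s\nabla f(y_k)$; $\; x_{k+1} = z_k$ if $f(z_k)\le f(x_k)$ and $x_{k+1} = x_k$ otherwise; $\; y_{k+1} = x_{k+1} + \frac{k}{k+r+1}(x_{k+1} - x_k) + \frac{k+r}{k+r+1}(z_k - x_{k+1})$. *)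

theory Defs
  imports "HOL-Analysis.Analysis"
begin

definition in_S1 :: "real \<Rightarrow> real \<Rightarrow> ('a::euclidean_space \<Rightarrow> real) \<Rightarrow> ('a \<Rightarrow> 'a) \<Rightarrow> bool" where
  "in_S1 \<mu> L f g \<longleftrightarrow>
     (\<forall>x. (f has_derivative (\<lambda>h. g x \<bullet> h)) (at x)) \<and>
     (\<forall>x y. norm (g x - g y) \<le> L * norm (x - y)) \<and>
     (\<forall>x y. f y \<ge> f x + g x \<bullet> (y - x) + \<mu> / 2 * (norm (y - x))\<^sup>2)"

fun mnag :: "('a::euclidean_space \<Rightarrow> real) \<Rightarrow> ('a \<Rightarrow> 'a) \<Rightarrow> real \<Rightarrow> real \<Rightarrow> 'a \<Rightarrow> nat \<Rightarrow> 'a \<times> 'a" where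
  "mnag f g s r x0 0 = (x0, x0)"
| "mnag f g s r x0 (Suc k) =
     (let (x, y) = mnag f g s r x0 k;
          z = y - s *\<^sub>R g y;
          x' = (if f z \<le> f x then z else x);
          y' = x' + (real k / (real k + r + 1)) *\<^sub>R (x' - x)
                  + ((real k + r) / (real k + r + 1)) *\<^sub>R (z - x')
      in (x', y'))"

definition mnag_x where "mnag_x f g s r x0 k = fst (mnag f g s r x0 k)"
definition mnag_y where "mnag_y f g s r x0 k = snd (mnag f g s r x0 k)"

definition mnag_E :: "('a::euclidean_space \<Rightarrow> real) \<Rightarrow> ('a \<Rightarrow> 'a) \<Rightarrow> real \<Rightarrow> real \<Rightarrow> 'a \<Rightarrow> 'a \<Rightarrow> nat \<Rightarrow> real" where
  "mnag_E f g s r x0 xs k =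
     (let xk = mnag_x f g s r x0 k; yk = mnag_y f g s r x0 k;
          xk1 = mnag_x f g s r x0 (Suc k)
      in s * (real k + 1) * (real k + r + 1) * (f xk1 - f xs)
         + 1/2 * (norm (real k *\<^sub>R (yk - xk) + r *\<^sub>R (yk - xs)
                        - ((real k + r) * s) *\<^sub>R g yk))\<^sup>2)"

end

theory Submission
  imports Defs
begin

text \<open>The vector inside \<open>E(k)\<close> equals \<open>(k+1)(y\<^sub>k\<^sub>+\<^sub>1 - x\<^sub>k\<^sub>+\<^sub>1) + r(y\<^sub>k\<^sub>+\<^sub>1 - x\<^sup>\<star>)\<close>
  (momentum identity), so both \<open>E(k)\<close> and \<open>E(k+1)\<close> are expressed at the single point
  \<open>y = y\<^sub>k\<^sub>+\<^sub>1\<close>. Strong convexity at \<open>y\<close> towards \<open>x\<^sub>k\<^sub>+\<^sub>1\<close> and \<open>x\<^sup>\<star>\<close>, the descent lemma for the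
  gradient step \<open>z = y - s\<nabla>f(y)\<close> and the monotone choice \<open>f(x\<^sub>k\<^sub>+\<^sub>2) \<le> f(z)\<close> give
  \<open>E(k+1) - E(k) \<le> -R\<close>, where \<open>R\<close> is a nonnegative combination of \<open>\<parallel>y - x\<^sub>k\<^sub>+\<^sub>1\<parallel>\<^sup>2\<close>,
  \<open>\<parallel>y - x\<^sup>\<star>\<parallel>\<^sup>2\<close> and \<open>\<parallel>\<nabla>f(y)\<parallel>\<^sup>2\<close>. Bounding \<open>E(k+1)\<close> by the same three quantities, using
  the Polyak--Lojasiewicz inequality and \<open>\<parallel>a + b + c\<parallel>\<^sup>2 \<le> 3(\<parallel>a\<parallel>\<^sup>2 + \<parallel>b\<parallel>\<^sup>2 + \<parallel>c\<parallel>\<^sup>2)\<close>,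
  then shows \<open>\<mu>s(1 - Ls)/4 \<cdot> E(k+1) \<le> R\<close>.\<close>

lemma mnag_x_Suc:
  "mnag_x f g s r x0 (Suc k) =
     (let z = mnag_y f g s r x0 k - s *\<^sub>R g (mnag_y f g s r x0 k)
      in if f z \<le> f (mnag_x f g s r x0 k) then z else mnag_x f g s r x0 k)"
  by (cases "mnag f g s r x0 k") (simp add: mnag_x_def mnag_y_def Let_def)

lemma mnag_y_Suc:
  "mnag_y f g s r x0 (Suc k) =
     mnag_x f g s r x0 (Suc k)
     + (real k / (real k + r + 1)) *\<^sub>R (mnag_x f g s r x0 (Suc k) - mnag_x f g s r x0 k)
     + ((real k + r) / (real k + r + 1)) *\<^sub>R
         (mnag_y f g s r x0 k - s *\<^sub>R g (mnag_y f g s r x0 k) - mnag_x f g s r x0 (Suc k))"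
  by (cases "mnag f g s r x0 k") (simp add: mnag_x_def mnag_y_def Let_def)

lemma f_mnag_x_Suc_le:
  "f (mnag_x f g s r x0 (Suc k)) \<le> f (mnag_y f g s r x0 k - s *\<^sub>R g (mnag_y f g s r x0 k))"
  unfolding mnag_x_Suc Let_def by auto

lemma momentum_identity:
  fixes x x' y xs gy :: "'a::real_vector" and n r s :: real
  assumes "n + r + 1 \<noteq> 0"
  defines "y' \<equiv> x' + (n / (n + r + 1)) *\<^sub>R (x' - x)
                  + ((n + r) / (n + r + 1)) *\<^sub>R (y - s *\<^sub>R gy - x')"
  shows "(n + 1) *\<^sub>R (y' - x') + r *\<^sub>R (y' - xs)
       = n *\<^sub>R (y - x) + r *\<^sub>R (y - xs) - ((n + r) * s) *\<^sub>R gy"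
proof -
  define t where "t = n + r + 1"
  have "t \<noteq> 0" using assms unfolding t_def by auto
  have "t *\<^sub>R y' = t *\<^sub>R x' + (t * (n / t)) *\<^sub>R (x' - x)
                    + (t * ((n + r) / t)) *\<^sub>R (y - s *\<^sub>R gy - x')"
    unfolding y'_def t_def[symmetric] by (simp add: scaleR_add_right)
  also have "\<dots> = t *\<^sub>R x' + n *\<^sub>R (x' - x) + (n + r) *\<^sub>R (y - s *\<^sub>R gy - x')"
    using \<open>t \<noteq> 0\<close> by simp
  also have "\<dots> = (n + 1) *\<^sub>R x' - n *\<^sub>R x + (n + r) *\<^sub>R (y - s *\<^sub>R gy)"
    unfolding t_def by (simp add: algebra_simps)
  finally have ty': "t *\<^sub>R y' = (n + 1) *\<^sub>R x' - n *\<^sub>R x + (n + r) *\<^sub>R (y - s *\<^sub>R gy)" .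
  have "(n + 1) *\<^sub>R (y' - x') + r *\<^sub>R (y' - xs) = t *\<^sub>R y' - (n + 1) *\<^sub>R x' - r *\<^sub>R xs"
    unfolding t_def by (simp add: algebra_simps)
  then show ?thesis
    unfolding ty' by (simp add: algebra_simps)
qed

lemma mnag_momentum_vector:
  assumes "0 \<le> r"
  shows "(real k + 1) *\<^sub>R (mnag_y f g s r x0 (Suc k) - mnag_x f g s r x0 (Suc k))
           + r *\<^sub>R (mnag_y f g s r x0 (Suc k) - xs)
         = real k *\<^sub>R (mnag_y f g s r x0 k - mnag_x f g s r x0 k) + r *\<^sub>R (mnag_y f g s r x0 k - xs)
           - ((real k + r) * s) *\<^sub>R g (mnag_y f g s r x0 k)"
  unfolding mnag_y_Suc by (rule momentum_identity) (use assms in simp)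

lemma mnag_E_eq:
  assumes "0 \<le> r"
  shows "mnag_E f g s r x0 xs k =
     s * (real k + 1) * (real k + r + 1) * (f (mnag_x f g s r x0 (Suc k)) - f xs)
     + 1/2 * (norm ((real k + 1) *\<^sub>R (mnag_y f g s r x0 (Suc k) - mnag_x f g s r x0 (Suc k))
                    + r *\<^sub>R (mnag_y f g s r x0 (Suc k) - xs)))\<^sup>2"
  unfolding mnag_E_def Let_def mnag_momentum_vector[OF assms] ..

lemma in_S1_strong_convexity:
  assumes "in_S1 \<mu> L f g"
  shows "f x + g x \<bullet> (y - x) + \<mu> / 2 * (norm (y - x))\<^sup>2 \<le> f y"
  using assms unfolding in_S1_def by blast

lemma lipschitz_gradient_upper_bound:
  fixes f :: "'a::real_inner \<Rightarrow> real"
  assumes deriv: "\<And>x. (f has_derivative (\<lambda>h. g x \<bullet> h)) (at x)"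
    and lip: "\<And>x y. norm (g x - g y) \<le> L * norm (x - y)"
  shows "f (y + h) \<le> f y + g y \<bullet> h + L / 2 * (norm h)\<^sup>2"
proof -
  have deriv_line: "((\<lambda>t. f (y + t *\<^sub>R h)) has_real_derivative g (y + t *\<^sub>R h) \<bullet> h) (at t)" for t
  proof -
    have "((\<lambda>t. f (y + t *\<^sub>R h)) has_derivative (\<lambda>u. g (y + t *\<^sub>R h) \<bullet> (u *\<^sub>R h))) (at t)"
      by (rule has_derivative_compose[OF _ deriv]) (auto intro!: derivative_eq_intros)
    then show ?thesis
      by (simp add: has_field_derivative_def mult.commute[of _ "g (y + t *\<^sub>R h) \<bullet> h"])
  qed
  define \<psi> where "\<psi> t = f (y + t *\<^sub>R h) - t * (g y \<bullet> h) - L / 2 * t\<^sup>2 * (norm h)\<^sup>2" for t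
  have deriv_\<psi>: "(\<psi> has_real_derivative g (y + t *\<^sub>R h) \<bullet> h - g y \<bullet> h - L * t * (norm h)\<^sup>2) (at t)" for t
    unfolding \<psi>_def by (rule derivative_eq_intros deriv_line refl | simp)+
  obtain \<xi> where \<xi>: "0 < \<xi>" "\<xi> < 1"
    and mvt: "\<psi> 1 - \<psi> 0 = g (y + \<xi> *\<^sub>R h) \<bullet> h - g y \<bullet> h - L * \<xi> * (norm h)\<^sup>2"
    using MVT2[of 0 1 \<psi>, OF _ deriv_\<psi>] by auto
  have "g (y + \<xi> *\<^sub>R h) \<bullet> h - g y \<bullet> h \<le> norm (g (y + \<xi> *\<^sub>R h) - g y) * norm h"
    unfolding inner_diff_left[symmetric] by (rule norm_cauchy_schwarz)
  also have "\<dots> \<le> L * norm (\<xi> *\<^sub>R h) * norm h"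
    using lip[of "y + \<xi> *\<^sub>R h" y] by (simp add: mult_right_mono)
  also have "\<dots> = L * \<xi> * (norm h)\<^sup>2"
    using \<xi> by (simp add: power2_eq_square)
  finally have "\<psi> 1 \<le> \<psi> 0" using mvt by simp
  then show ?thesis unfolding \<psi>_def by simp
qed

lemma in_S1_gradient_step:
  assumes "in_S1 \<mu> L f g"
  shows "f (y - s *\<^sub>R g y) \<le> f y - s * (1 - L * s / 2) * (norm (g y))\<^sup>2"
  using lipschitz_gradient_upper_bound[of f g L y "- s *\<^sub>R g y"] assms unfolding in_S1_def
  by (simp add: power2_norm_eq_inner[symmetric] power_mult_distrib algebra_simps power2_eq_square)

text \<open>Polyak--Lojasiewicz inequality: minimize the strong convexity lower bound over its
  second argument.\<close>
lemma in_S1_gap_le_gradient: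
  assumes "in_S1 \<mu> L f g" "0 < \<mu>" "\<forall>y. f xs \<le> f y"
  shows "f y - f xs \<le> (norm (g y))\<^sup>2 / (2 * \<mu>)"
proof -
  have "0 \<le> (norm (\<mu> *\<^sub>R (xs - y) + g y))\<^sup>2" by simp
  also have "\<dots> = \<mu>\<^sup>2 * (norm (xs - y))\<^sup>2 + 2 * \<mu> * (g y \<bullet> (xs - y)) + (norm (g y))\<^sup>2"
    by (simp only: power2_norm_eq_inner)
      (simp add: inner_add_left inner_add_right inner_commute power2_eq_square algebra_simps)
  finally have "- (norm (g y))\<^sup>2 / (2 * \<mu>) \<le> g y \<bullet> (xs - y) + \<mu> / 2 * (norm (xs - y))\<^sup>2"
    using assms(2) by (simp add: field_simps power2_eq_square)
  then show ?thesis
    using in_S1_strong_convexity[OF assms(1), of y xs] by simp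
qed

lemma norm_add3_power2_le:
  fixes p q t :: "'a::real_normed_vector"
  shows "(norm (p + q + t))\<^sup>2 \<le> 3 * ((norm p)\<^sup>2 + (norm q)\<^sup>2 + (norm t)\<^sup>2)"
proof -
  have "norm (p + q + t) \<le> norm p + norm q + norm t"
    by (metis add_right_mono norm_triangle_ineq order_trans)
  then have "(norm (p + q + t))\<^sup>2 \<le> (norm p + norm q + norm t)\<^sup>2"
    by (rule power_mono) simp
  also have "\<dots> \<le> 3 * ((norm p)\<^sup>2 + (norm q)\<^sup>2 + (norm t)\<^sup>2)"
    using sum_squares_ge_zero[of "norm p - norm q" "norm q - norm t"]
      zero_le_power2[of "norm p - norm t"]
    by (simp add: power2_eq_square algebra_simps)
  finally show ?thesis .
qed

lemma momentum_weight_le: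
  fixes n r :: real
  assumes "2 \<le> r" "0 \<le> n"
  shows "(n + 1) * (n + r + 1) \<le> (n + r)\<^sup>2"
proof -
  have "(n + r)\<^sup>2 - (n + 1) * (n + r + 1) = (r - 2) * n + (r * r - r - 1)"
    by (simp add: power2_eq_square algebra_simps)
  moreover have "0 \<le> (r - 2) * n" using assms by simp
  moreover have "r * r \<ge> 2 * r" using assms by (simp add: mult_right_mono)
  ultimately show ?thesis using assms by linarith
qed

lemma lyapunov_decrease:
  fixes f :: "'a::euclidean_space \<Rightarrow> real" and x x' y xs :: 'a and n :: real
  assumes S1: "in_S1 \<mu> L f g" and min: "\<forall>y. f xs \<le> f y"
    and "0 < s" "2 \<le> r" "0 \<le> n"
    and step: "f x' \<le> f (y - s *\<^sub>R g y)"
  defines "m \<equiv> n + r" and "v \<equiv> n *\<^sub>R (y - x) + r *\<^sub>R (y - xs)"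
  shows "s * (n + 1) * (m + 1) * (f x' - f xs) + 1/2 * (norm (v - (m * s) *\<^sub>R g y))\<^sup>2
           - (s * n * m * (f x - f xs) + 1/2 * (norm v)\<^sup>2)
         \<le> - m * s * \<mu> / 2 * (n * (norm (y - x))\<^sup>2 + r * (norm (y - xs))\<^sup>2)
           - m\<^sup>2 * s\<^sup>2 * (1 - L * s) / 2 * (norm (g y))\<^sup>2"
proof -
  define G P Q a b where "G = (norm (g y))\<^sup>2" and "P = (norm (y - x))\<^sup>2"
    and "Q = (norm (y - xs))\<^sup>2" and "a = g y \<bullet> (y - x)" and "b = g y \<bullet> (y - xs)"
  have norm_v: "(norm (v - (m * s) *\<^sub>R g y))\<^sup>2 = (norm v)\<^sup>2 - 2 * m * s * (n * a + r * b) + (m * s)\<^sup>2 * G"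
    unfolding G_def a_def b_def v_def
    by (simp only: power2_norm_eq_inner)
      (simp add: inner_diff_left inner_diff_right inner_add_right inner_commute power2_eq_square algebra_simps)
  have convex_x: "f x - f y \<ge> - a + \<mu> / 2 * P"
    using in_S1_strong_convexity[OF S1, of y x]
    unfolding a_def P_def by (simp add: inner_diff_right norm_minus_commute)
  have convex_xs: "f xs - f y \<ge> - b + \<mu> / 2 * Q"
    using in_S1_strong_convexity[OF S1, of y xs]
    unfolding b_def Q_def by (simp add: inner_diff_right norm_minus_commute)
  have convexity: "0 \<le> m * s * (n * a + r * b)
                 - m * s * (n * (f y - f x) + r * (f y - f xs) + \<mu> / 2 * (n * P + r * Q))"
  proof -
    have "n * (f y - f x) + r * (f y - f xs) + \<mu> / 2 * (n * P + r * Q) \<le> n * a + r * b"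
      using mult_left_mono[OF convex_x, of n] mult_left_mono[OF convex_xs, of r] assms(4,5)
      by (simp add: algebra_simps)
    moreover have "0 \<le> m * s" using assms(3-5) unfolding m_def by simp
    ultimately show ?thesis by (simp add: mult_left_mono)
  qed
  have descent: "0 \<le> s * m\<^sup>2 * (f y - f xs) - s * m\<^sup>2 * (f x' - f xs + s * (1 - L * s / 2) * G)"
    using step in_S1_gradient_step[OF S1, of y s] \<open>0 < s\<close> unfolding G_def
    by (simp add: mult_left_mono)
  have weight: "0 \<le> s * (m\<^sup>2 - (n + 1) * (m + 1)) * (f x' - f xs)"
    using momentum_weight_le[OF assms(4,5)] min \<open>0 < s\<close> unfolding m_def by simp
  have "(- m * s * \<mu> / 2 * (n * P + r * Q) - m\<^sup>2 * s\<^sup>2 * (1 - L * s) / 2 * G)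
        - (s * (n + 1) * (m + 1) * (f x' - f xs) + 1/2 * (norm (v - (m * s) *\<^sub>R g y))\<^sup>2
           - (s * n * m * (f x - f xs) + 1/2 * (norm v)\<^sup>2))
      = (m * s * (n * a + r * b)
         - m * s * (n * (f y - f x) + r * (f y - f xs) + \<mu> / 2 * (n * P + r * Q)))
        + (s * m\<^sup>2 * (f y - f xs) - s * m\<^sup>2 * (f x' - f xs + s * (1 - L * s / 2) * G))
        + s * (m\<^sup>2 - (n + 1) * (m + 1)) * (f x' - f xs)"
    unfolding norm_v by (simp add: m_def field_simps power2_eq_square)
  then show ?thesis
    using convexity descent weight unfolding G_def P_def Q_def by linarith
qed

lemma lyapunov_upper_bound:
  fixes f :: "'a::euclidean_space \<Rightarrow> real" and x x' y xs :: 'a and n :: real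
  assumes S1: "in_S1 \<mu> L f g" and "0 < \<mu>" and min: "\<forall>y. f xs \<le> f y"
    and "0 < s" "L * s \<le> 2" "0 \<le> n" "0 \<le> r"
    and step: "f x' \<le> f (y - s *\<^sub>R g y)"
  defines "m \<equiv> n + r" and "v \<equiv> n *\<^sub>R (y - x) + r *\<^sub>R (y - xs)"
  shows "s * (n + 1) * (m + 1) * (f x' - f xs) + 1/2 * (norm (v - (m * s) *\<^sub>R g y))\<^sup>2
         \<le> s * (n + 1) * (m + 1) * ((norm (g y))\<^sup>2 / (2 * \<mu>))
           + 3/2 * (n\<^sup>2 * (norm (y - x))\<^sup>2 + r\<^sup>2 * (norm (y - xs))\<^sup>2 + m\<^sup>2 * s\<^sup>2 * (norm (g y))\<^sup>2)"
proof -
  have "0 \<le> s * (1 - L * s / 2) * (norm (g y))\<^sup>2"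
    using assms(4,5) by simp
  then have "f x' \<le> f y"
    using step in_S1_gradient_step[OF S1, of y s] by linarith
  then have "f x' - f xs \<le> (norm (g y))\<^sup>2 / (2 * \<mu>)"
    using in_S1_gap_le_gradient[OF S1 \<open>0 < \<mu>\<close> min, of y] by simp
  then have gap: "s * (n + 1) * (m + 1) * (f x' - f xs) \<le> s * (n + 1) * (m + 1) * ((norm (g y))\<^sup>2 / (2 * \<mu>))"
    using assms(4,6,7) unfolding m_def by (intro mult_left_mono) simp_all
  have "(norm (v - (m * s) *\<^sub>R g y))\<^sup>2
        \<le> 3 * ((norm (n *\<^sub>R (y - x)))\<^sup>2 + (norm (r *\<^sub>R (y - xs)))\<^sup>2 + (norm ((- (m * s)) *\<^sub>R g y))\<^sup>2)"
    using norm_add3_power2_le[of "n *\<^sub>R (y - x)" "r *\<^sub>R (y - xs)" "(- (m * s)) *\<^sub>R g y"]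
    unfolding v_def by (simp add: algebra_simps)
  also have "\<dots> = 3 * (n\<^sup>2 * (norm (y - x))\<^sup>2 + r\<^sup>2 * (norm (y - xs))\<^sup>2 + m\<^sup>2 * s\<^sup>2 * (norm (g y))\<^sup>2)"
    by (simp add: power_mult_distrib)
  finally show ?thesis using gap by linarith
qed

lemma lyapunov_rate:
  fixes \<mu> L s n r G P Q :: real
  assumes "0 < \<mu>" "\<mu> \<le> L" "0 < s" "L * s \<le> 1" "2 \<le> r" "0 \<le> n"
    and "0 \<le> G" "0 \<le> P" "0 \<le> Q"
  defines "m \<equiv> n + r"
  shows "\<mu> * s * ((1 - L * s) / 4) * (s * (n + 1) * (m + 1) * (G / (2 * \<mu>))
           + 3/2 * (n\<^sup>2 * P + r\<^sup>2 * Q + m\<^sup>2 * s\<^sup>2 * G))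
         \<le> m * s * \<mu> / 2 * (n * P + r * Q) + m\<^sup>2 * s\<^sup>2 * (1 - L * s) / 2 * G"
proof -
  define c where "c = 1 - L * s"
  have "\<mu> * s \<le> 1"
    using mult_right_mono[OF \<open>\<mu> \<le> L\<close>, of s] assms(3,4) by linarith
  have "0 \<le> c" "c \<le> 1"
    using assms(1-4) mult_right_mono[OF \<open>\<mu> \<le> L\<close>, of s] mult_pos_pos[of \<mu> s]
    unfolding c_def by linarith+
  have weight: "c * s\<^sup>2 * G * ((n + 1) * (m + 1)) \<le> c * s\<^sup>2 * G * m\<^sup>2"
    using momentum_weight_le[OF assms(5,6)] \<open>0 \<le> c\<close> \<open>0 \<le> G\<close> unfolding m_def
    by (intro mult_left_mono) simp_all
  have gradient: "3 * (c * s\<^sup>2 * G * m\<^sup>2 * (\<mu> * s)) \<le> 3 * (c * s\<^sup>2 * G * m\<^sup>2)"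
    using \<open>\<mu> * s \<le> 1\<close> \<open>0 \<le> c\<close> \<open>0 \<le> G\<close> by (simp add: mult_left_le)
  have distance_x: "\<mu> * s * n * P * (3 * (c * n)) \<le> \<mu> * s * n * P * (4 * m)"
    using \<open>0 \<le> c\<close> \<open>c \<le> 1\<close> assms unfolding m_def
    by (intro mult_left_mono) (simp_all, smt (verit) mult_left_le_one_le)
  have distance_xs: "\<mu> * s * r * Q * (3 * (c * r)) \<le> \<mu> * s * r * Q * (4 * m)"
    using \<open>0 \<le> c\<close> \<open>c \<le> 1\<close> assms unfolding m_def
    by (intro mult_left_mono) (simp_all, smt (verit) mult_left_le_one_le)
  have "\<mu> * s * (c / 4) * (s * (n + 1) * (m + 1) * (G / (2 * \<mu>))
           + 3/2 * (n\<^sup>2 * P + r\<^sup>2 * Q + m\<^sup>2 * s\<^sup>2 * G))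
      = (c * s\<^sup>2 * G * ((n + 1) * (m + 1)) + 3 * (c * s\<^sup>2 * G * m\<^sup>2 * (\<mu> * s))
         + \<mu> * s * n * P * (3 * (c * n)) + \<mu> * s * r * Q * (3 * (c * r))) / 8"
    using \<open>0 < \<mu>\<close> by (simp add: field_simps power2_eq_square)
  also have "\<dots> \<le> (c * s\<^sup>2 * G * m\<^sup>2 + 3 * (c * s\<^sup>2 * G * m\<^sup>2)
         + \<mu> * s * n * P * (4 * m) + \<mu> * s * r * Q * (4 * m)) / 8"
    using add_mono[OF add_mono[OF add_mono[OF weight gradient] distance_x] distance_xs]
    by (rule divide_right_mono) simp
  also have "\<dots> = m * s * \<mu> / 2 * (n * P + r * Q) + m\<^sup>2 * s\<^sup>2 * c / 2 * G"
    by (simp add: field_simps power2_eq_square)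
  finally show ?thesis
    unfolding c_def .
qed

theorem mainTheorem6:
  fixes f :: "'a::euclidean_space \<Rightarrow> real" and g :: "'a \<Rightarrow> 'a"
    and \<mu> L s r :: real and xs x0 :: 'a and k :: nat
  assumes "in_S1 \<mu> L f g" and "0 < \<mu>" and "\<mu> \<le> L"
    and "\<forall>y. f xs \<le> f y"
    and "r \<ge> 2" and "0 < s" and "s < 1 / L"
    and "real k \<ge> max 0 ((3 * r\<^sup>2 - 4 * r - 12) / 8)"
  shows "mnag_E f g s r x0 xs (Suc k) - mnag_E f g s r x0 xs k
           \<le> - \<mu> * s * ((1 - L * s) / 4) * mnag_E f g s r x0 xs (Suc k)"
proof -
  have "L * s \<le> 1"
    using assms(2,3,7) by (simp add: field_simps)
  define n x y x' where "n = real k + 1" and "x = mnag_x f g s r x0 (Suc k)"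
    and "y = mnag_y f g s r x0 (Suc k)" and "x' = mnag_x f g s r x0 (Suc (Suc k))"
  have "0 \<le> n" unfolding n_def by simp
  have step: "f x' \<le> f (y - s *\<^sub>R g y)"
    unfolding x'_def y_def by (rule f_mnag_x_Suc_le)
  have E: "mnag_E f g s r x0 xs k
             = s * n * (n + r) * (f x - f xs) + 1/2 * (norm (n *\<^sub>R (y - x) + r *\<^sub>R (y - xs)))\<^sup>2"
    "mnag_E f g s r x0 xs (Suc k)
       = s * (n + 1) * (n + r + 1) * (f x' - f xs)
         + 1/2 * (norm (n *\<^sub>R (y - x) + r *\<^sub>R (y - xs) - ((n + r) * s) *\<^sub>R g y))\<^sup>2"
    using assms(5) unfolding n_def x_def y_def x'_def
    by (simp_all add: mnag_E_eq mnag_E_def[of _ _ _ _ _ _ "Suc k"] Let_def algebra_simps)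
  have decrease: "mnag_E f g s r x0 xs (Suc k) - mnag_E f g s r x0 xs k
        \<le> - (n + r) * s * \<mu> / 2 * (n * (norm (y - x))\<^sup>2 + r * (norm (y - xs))\<^sup>2)
          - (n + r)\<^sup>2 * s\<^sup>2 * (1 - L * s) / 2 * (norm (g y))\<^sup>2"
    unfolding E by (rule lyapunov_decrease[OF assms(1,4,6,5) \<open>0 \<le> n\<close> step])
  have "mnag_E f g s r x0 xs (Suc k)
        \<le> s * (n + 1) * (n + r + 1) * ((norm (g y))\<^sup>2 / (2 * \<mu>))
          + 3/2 * (n\<^sup>2 * (norm (y - x))\<^sup>2 + r\<^sup>2 * (norm (y - xs))\<^sup>2 + (n + r)\<^sup>2 * s\<^sup>2 * (norm (g y))\<^sup>2)"
    (is "_ \<le> ?bound")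
    unfolding E using \<open>L * s \<le> 1\<close> assms(5) \<open>0 \<le> n\<close>
    by (intro lyapunov_upper_bound[OF assms(1,2,4,6) _ _ _ step]) simp_all
  then have "\<mu> * s * ((1 - L * s) / 4) * mnag_E f g s r x0 xs (Suc k)
        \<le> \<mu> * s * ((1 - L * s) / 4) * ?bound"
    using assms(2,6) \<open>L * s \<le> 1\<close> by (intro mult_left_mono) simp_all
  also have "\<dots> \<le> (n + r) * s * \<mu> / 2 * (n * (norm (y - x))\<^sup>2 + r * (norm (y - xs))\<^sup>2)
          + (n + r)\<^sup>2 * s\<^sup>2 * (1 - L * s) / 2 * (norm (g y))\<^sup>2"
    by (rule lyapunov_rate[OF assms(2,3,6) \<open>L * s \<le> 1\<close> assms(5) \<open>0 \<le> n\<close>]) simp_all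
  finally show ?thesis
    using decrease by linarith
qed

end
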